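(* Let $\mathcal{D}\subset\mathbb{R}^d$ be bounded and convex with non-empty interior. Assume $\mathcal{C}\subset\Gamma\backslash G$ is compact and $\theta>\overline\rho(\mathcal{C},\mathcal{D}\times(0,1])$. Then \[F(M,t)\leq\theta^{d+1}\] for all $M$ with $\Gamma M\in\mathcal{C}D(\theta)^{-1}$ and all $t\in\mathcal{D}$.
   Context: Let $G=\operatorname{SL}(d+1,\mathbb{R})$ and $\Gamma=\operatorname{SL}(d+1,\mathbb{Z})$; vectors are row vectors and $\mathbb{Z}^{d+1}M$ is the lattice spanned by the rows of $M$. For $M\in G$, $t\in\mathcal{D}$: $F(M,t)=\min\{y>0\mid (x,y)\in\mathbb{Z}^{d+1}M,\ x+t\in\mathcal{D}\}$ ($x\in\mathbb{R}^d$, $y\in\mathbb{R}$), and $\infty$ if no minimum exists. For a bounded $\mathcal{A}\subset\mathbb{R}^{d+1}$ with non-empty interior, the covering radius is $\rho(M,\mathcal{A})=\inf\{\theta>0\mid \theta\mathcal{A}+\mathbb{Z}^{d+1}M=\mathbb{R}^{d+1}\}$, and for $\mathcal{C}\subset\Gamma\backslash G$, $\overline\rho(\mathcal{C},\mathcal{A})=\sup_{\Gamma M\in\mathcal{C}}\rho(M,\mathcal{A})$. For $\theta>0$, $D(\theta)=\operatorname{diag}(\theta,\ldots,\theta,\theta^{-d})\in G$ (with $d$ entries $\theta$), and $\mathcal{C}D(\theta)^{-1}=\{\Gamma MD(\theta)^{-1}\mid \Gamma M\in\mathcal{C}\}$. *)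

theory Defs
  imports "HOL-Analysis.Analysis"
begin

text \<open>Dimension: the index type 'n has d = CARD('n) elements; R^(d+1) is
  real^('n + unit), the coordinate Inr () being the last coordinate y, the
  coordinates Inl i forming x in R^d.  Vectors are row vectors: v v* M.\<close>

type_synonym 'n mat1 = "real^('n + unit)^('n + unit)"

definition SLR :: "('n::finite) mat1 set" where
  "SLR = {M. det M = 1}"

definition SLZ :: "('n::finite) mat1 set" where
  "SLZ = {M. det M = 1 \<and> (\<forall>i j. M $ i $ j \<in> \<int>)}"

definition coset :: "('n::finite) mat1 \<Rightarrow> ('n mat1) set" where
  "coset M = {g ** M | g. g \<in> SLZ}"

definition quotSL :: "('n::finite) mat1 set set" where
  "quotSL = coset ` SLR"

definition quot_top :: "('n::finite) mat1 set topology" where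
  "quot_top = topology (\<lambda>U. U \<subseteq> quotSL \<and>
       openin (top_of_set SLR) {M \<in> SLR. coset M \<in> U})"



lemma istopology_quot:
  "istopology (\<lambda>U. U \<subseteq> (quotSL::('n::finite) mat1 set set) \<and>
       openin (top_of_set SLR) {M \<in> SLR. coset M \<in> U})"
  unfolding istopology_def
proof (rule conjI; intro allI impI)
  fix S T :: "'n mat1 set set"
  assume a: "S \<subseteq> quotSL \<and> openin (top_of_set SLR) {M \<in> SLR. coset M \<in> S}"
     and b: "T \<subseteq> quotSL \<and> openin (top_of_set SLR) {M \<in> SLR. coset M \<in> T}"
  have e: "{M \<in> SLR. coset M \<in> S \<inter> T} = {M \<in> SLR. coset M \<in> S} \<inter> {M \<in> SLR. coset M \<in> T}" by auto
  show "S \<inter> T \<subseteq> quotSL \<and> openin (top_of_set SLR) {M \<in> SLR. coset M \<in> S \<inter> T}"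
    using a b unfolding e by (simp add: le_infI1 openin_Int)
next
  fix K :: "'n mat1 set set set"
  assume "\<forall>S\<in>K. S \<subseteq> quotSL \<and> openin (top_of_set SLR) {M \<in> SLR. coset M \<in> S}"
  moreover have eq: "{M \<in> SLR. coset M \<in> \<Union>K} = (\<Union>S\<in>K. {M \<in> SLR. coset M \<in> S})" by auto
  ultimately have "openin (top_of_set SLR) (\<Union>S\<in>K. {M \<in> SLR. coset M \<in> S})"
    by (intro openin_Union) auto
  with \<open>\<forall>S\<in>K. _\<close> eq show "\<Union>K \<subseteq> quotSL \<and> openin (top_of_set SLR) {M \<in> SLR. coset M \<in> \<Union>K}"
    by auto
qed

definition lattice :: "('n::finite) mat1 \<Rightarrow> (real^('n + unit)) set" where
  "lattice M = {v v* M | v. \<forall>i. v $ i \<in> \<int>}"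

definition xpart :: "real^('n::finite + unit) \<Rightarrow> real^'n" where
  "xpart v = (\<chi> i. v $ Inl i)"

definition ypart :: "real^('n::finite + unit) \<Rightarrow> real" where
  "ypart v = v $ Inr ()"

definition Fset :: "('n::finite) mat1 \<Rightarrow> (real^'n) set \<Rightarrow> real^'n \<Rightarrow> real set" where
  "Fset M D t = {y. y > 0 \<and> (\<exists>v \<in> lattice M. ypart v = y \<and> xpart v + t \<in> D)}"

definition Ffun :: "('n::finite) mat1 \<Rightarrow> (real^'n) set \<Rightarrow> real^'n \<Rightarrow> ereal" where
  "Ffun M D t = (if \<exists>y \<in> Fset M D t. \<forall>z \<in> Fset M D t. y \<le> z
                 then ereal (Inf (Fset M D t)) else \<infinity>)"

definition covrad :: "('n::finite) mat1 \<Rightarrow> (real^('n + unit)) set \<Rightarrow> real" where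
  "covrad M A = Inf {\<theta>. \<theta> > 0 \<and> {a + l | a l. a \<in> (\<lambda>x. \<theta> *\<^sub>R x) ` A \<and> l \<in> lattice M} = UNIV}"

definition covrad_sup :: "('n::finite) mat1 set set \<Rightarrow> (real^('n + unit)) set \<Rightarrow> ereal" where
  "covrad_sup C A = (SUP c \<in> C. SUP M \<in> c. ereal (covrad M A))"

definition Dmat :: "real \<Rightarrow> ('n::finite) mat1" where
  "Dmat \<theta> = (\<chi> i j. if i = j then (case i of Inl _ \<Rightarrow> \<theta> | Inr _ \<Rightarrow> \<theta> powr (- real CARD('n))) else 0)"

definition cyl :: "(real^'n) set \<Rightarrow> (real^('n::finite + unit)) set" where
  "cyl D = {v. xpart v \<in> D \<and> 0 < ypart v \<and> ypart v \<le> 1}"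

end

theory Submission
  imports Defs
begin

text \<open>If \<open>\<Gamma>M = \<Gamma>N D(\<theta>)\<^sup>-\<^sup>1\<close> with \<open>\<rho>(N, D \<times> (0,1]) < \<theta>\<close>, then, the cylinder being convex,
  its \<open>\<theta>\<close>-dilate covers \<open>\<real>\<^sup>d\<^sup>+\<^sup>1\<close> modulo the lattice of \<open>N\<close>; applied to the point \<open>(\<theta>t, 0)\<close>
  this gives a lattice vector of \<open>N\<close> in \<open>\<theta>(D \<times> (0,1]) - (\<theta>t, 0)\<close>. Right multiplication by
  \<open>D(\<theta>)\<^sup>-\<^sup>1\<close> scales \<open>x\<close> by \<open>\<theta>\<^sup>-\<^sup>1\<close> and \<open>y\<close> by \<open>\<theta>\<^sup>d\<close>, producing a vector \<open>(x, y)\<close> of the lattice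
  of \<open>M\<close> with \<open>x + t \<in> D\<close> and \<open>0 < y \<le> \<theta>\<^sup>d\<^sup>+\<^sup>1\<close>. Since a lattice meets bounded sets in finitely
  many points, the infimum defining \<open>F(M,t)\<close> is attained and at most \<open>\<theta>\<^sup>d\<^sup>+\<^sup>1\<close>.\<close>

lemma finite_integer_vectors_bounded:
  fixes S :: "(real^'a::finite) set"
  assumes "bounded S"
  shows "finite {u \<in> S. \<forall>i. u$i \<in> \<int>}"
proof -
  obtain R where R: "\<And>u. u \<in> S \<Longrightarrow> norm u \<le> R" using assms bounded_iff by blast
  define Z where "Z = (of_int :: int \<Rightarrow> real) ` {-\<lceil>R\<rceil>..\<lceil>R\<rceil>}"
  have "{u \<in> S. \<forall>i. u$i \<in> \<int>} \<subseteq> vec_lambda ` (PiE UNIV (\<lambda>_. Z))"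
  proof
    fix u assume u: "u \<in> {u \<in> S. \<forall>i. u$i \<in> \<int>}"
    have "u$i \<in> Z" for i
    proof -
      obtain k where k: "u$i = of_int k" using u by (auto elim: Ints_cases)
      have "\<bar>u$i\<bar> \<le> R" using u R component_le_norm_cart order_trans by blast
      hence "k \<in> {-\<lceil>R\<rceil>..\<lceil>R\<rceil>}" unfolding k by (auto simp: abs_le_iff) linarith+
      thus "u$i \<in> Z" unfolding Z_def k by blast
    qed
    hence "vec_nth u \<in> PiE UNIV (\<lambda>_. Z)" by (simp add: PiE_UNIV_domain)
    thus "u \<in> vec_lambda ` (PiE UNIV (\<lambda>_. Z))" by (metis image_eqI vec_nth_inverse)
  qed
  moreover have "finite (vec_lambda ` (PiE UNIV (\<lambda>_. Z)))"
    unfolding Z_def by (intro finite_imageI finite_PiE) auto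
  ultimately show ?thesis by (rule finite_subset)
qed

lemma matrix_inv_mult:
  assumes "invertible (M::real^'a::finite^'a)"
  shows "M ** matrix_inv M = mat 1" "matrix_inv M ** M = mat 1"
  using someI_ex[OF assms[unfolded invertible_def]] unfolding matrix_inv_def by auto

lemma matrix_inv_eqI:
  fixes A B :: "real^'a::finite^'a"
  assumes "A ** B = mat 1" "B ** A = mat 1"
  shows "matrix_inv A = B"
proof -
  have "invertible A" using assms unfolding invertible_def by blast
  then have "matrix_inv A = (matrix_inv A ** A) ** B"
    by (metis assms(1) matrix_mul_assoc matrix_mul_rid matrix_inv_mult(1))
  then show ?thesis using matrix_inv_mult(2)[OF \<open>invertible A\<close>] by simp
qed

lemma lattice_Int_bounded_finite:
  fixes M :: "('n::finite) mat1"
  assumes "invertible M" and "bounded S"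
  shows "finite (lattice M \<inter> S)"
proof -
  let ?coord = "\<lambda>w. w v* matrix_inv M"
  have "lattice M \<inter> S \<subseteq> (\<lambda>u. u v* M) ` {u \<in> ?coord ` S. \<forall>i. u$i \<in> \<int>}"
  proof
    fix w assume "w \<in> lattice M \<inter> S"
    then obtain u where "w = u v* M" "\<forall>i. u$i \<in> \<int>" "w \<in> S" unfolding lattice_def by auto
    moreover have "u = ?coord w"
      using \<open>w = u v* M\<close> by (simp add: vector_matrix_mul_assoc matrix_inv_mult(1)[OF assms(1)])
    ultimately show "w \<in> (\<lambda>u. u v* M) ` {u \<in> ?coord ` S. \<forall>i. u$i \<in> \<int>}" by blast
  qed
  moreover have "bounded (?coord ` S)"
    using bounded_linear_image[OF assms(2) matrix_vector_mul_bounded_linear[of "transpose (matrix_inv M)"]]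
    by (simp add: o_def)
  ultimately show ?thesis
    by (blast intro: finite_subset finite_imageI finite_integer_vectors_bounded)
qed

lemma lattice_uminus:
  assumes "l \<in> lattice M"
  shows "- l \<in> lattice M"
proof -
  obtain u where "l = u v* M" "\<forall>i. u$i \<in> \<int>" using assms unfolding lattice_def by blast
  moreover have "- (u v* M) = (- u) v* M" using vector_matrix_mult_diff_distrib[of 0 u M] by simp
  ultimately show ?thesis unfolding lattice_def by force
qed

lemma vector_matrix_mult_rows: "v v* M = (\<Sum>i\<in>UNIV. v$i *\<^sub>R M$i)"
  by (simp add: vector_matrix_mult_def vec_eq_iff mult.commute)

lemma lattice_bounded_remainder:
  fixes M :: "('n::finite) mat1"
  assumes "invertible M"
  shows "\<exists>K. \<forall>p. \<exists>l \<in> lattice M. norm (p - l) \<le> K"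
proof (intro exI allI)
  fix p :: "real^('n+unit)"
  define u where "u = p v* matrix_inv M"
  define l where "l = (\<chi> i. real_of_int \<lfloor>u$i\<rfloor>) v* M"
  have "(\<chi> i. frac (u$i)) = u - (\<chi> i. real_of_int \<lfloor>u$i\<rfloor>)"
    by (simp add: vec_eq_iff frac_def)
  moreover have "u v* M = p"
    unfolding u_def by (simp add: vector_matrix_mul_assoc matrix_inv_mult(2)[OF assms])
  ultimately have "p - l = (\<chi> i. frac (u$i)) v* M"
    unfolding l_def by (simp add: vector_matrix_mult_diff_distrib)
  hence "norm (p - l) \<le> (\<Sum>i\<in>UNIV. norm (M$i))"
    unfolding vector_matrix_mult_rows
    by (auto intro!: order_trans[OF norm_sum] sum_mono mult_left_le_one_le simp: frac_lt_1 less_imp_le)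
  moreover have "l \<in> lattice M" unfolding l_def lattice_def by auto
  ultimately show "\<exists>l \<in> lattice M. norm (p - l) \<le> (\<Sum>i\<in>UNIV. norm (M$i))" by blast
qed

definition lattice_covering :: "real \<Rightarrow> (real^('n::finite + unit)) set \<Rightarrow> 'n mat1 \<Rightarrow> bool" where
  "lattice_covering \<theta> A M \<longleftrightarrow> (\<forall>p. \<exists>a \<in> A. p - \<theta> *\<^sub>R a \<in> lattice M)"

lemma covrad_eq_Inf: "covrad M A = Inf {\<theta>. 0 < \<theta> \<and> lattice_covering \<theta> A M}"
proof -
  have "p \<in> {a + l | a l. a \<in> (\<lambda>x. \<theta> *\<^sub>R x) ` A \<and> l \<in> lattice M} \<longleftrightarrow>
        (\<exists>a \<in> A. p - \<theta> *\<^sub>R a \<in> lattice M)" for \<theta> p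
  proof
    assume "p \<in> {a + l | a l. a \<in> (\<lambda>x. \<theta> *\<^sub>R x) ` A \<and> l \<in> lattice M}"
    then obtain a l where "a \<in> A" "l \<in> lattice M" "p = \<theta> *\<^sub>R a + l" by blast
    then show "\<exists>a \<in> A. p - \<theta> *\<^sub>R a \<in> lattice M" by (metis add_diff_cancel_left')
  next
    assume "\<exists>a \<in> A. p - \<theta> *\<^sub>R a \<in> lattice M"
    then obtain a where "a \<in> A" "p - \<theta> *\<^sub>R a \<in> lattice M" by blast
    then show "p \<in> {a + l | a l. a \<in> (\<lambda>x. \<theta> *\<^sub>R x) ` A \<and> l \<in> lattice M}"
      by (intro CollectI exI[of _ "\<theta> *\<^sub>R a"] exI[of _ "p - \<theta> *\<^sub>R a"]) auto
  qed
  then show ?thesis unfolding covrad_def lattice_covering_def set_eq_iff by simp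
qed

lemma lattice_covering_mono:
  assumes cov: "lattice_covering \<theta>' A M" and "convex A" "a0 \<in> A" "0 < \<theta>'" "\<theta>' \<le> \<theta>"
  shows "lattice_covering \<theta> A M"
  unfolding lattice_covering_def
proof
  fix p
  obtain a where "a \<in> A" and l: "p - (\<theta> - \<theta>') *\<^sub>R a0 - \<theta>' *\<^sub>R a \<in> lattice M"
    using cov unfolding lattice_covering_def by blast
  \<comment> \<open>\<open>\<theta> A \<supseteq> \<theta>' A + (\<theta> - \<theta>') a0\<close> by convexity\<close>
  define b where "b = (\<theta>'/\<theta>) *\<^sub>R a + (1 - \<theta>'/\<theta>) *\<^sub>R a0"
  have "b \<in> A"
    unfolding b_def using assms \<open>a \<in> A\<close> by (intro convexD) (auto simp: field_simps)
  moreover have "p - \<theta> *\<^sub>R b = p - (\<theta> - \<theta>') *\<^sub>R a0 - \<theta>' *\<^sub>R a"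
    unfolding b_def using assms by (simp add: algebra_simps)
  ultimately show "\<exists>b \<in> A. p - \<theta> *\<^sub>R b \<in> lattice M" using l by metis
qed

lemma lattice_covering_exists:
  assumes "invertible M" and ball: "ball c \<epsilon> \<subseteq> A" and "0 < \<epsilon>"
  shows "\<exists>\<theta>>0. lattice_covering \<theta> A M"
proof -
  obtain K where K: "\<And>p. \<exists>l \<in> lattice M. norm (p - l) \<le> K"
    using lattice_bounded_remainder[OF assms(1)] by blast
  define \<theta> where "\<theta> = (\<bar>K\<bar> + 1) / \<epsilon>"
  have "\<theta> > 0" unfolding \<theta>_def using \<open>0 < \<epsilon>\<close> by simp
  have "\<exists>a \<in> A. p - \<theta> *\<^sub>R a \<in> lattice M" for p
  proof -
    obtain l where "l \<in> lattice M" and f: "norm (p - \<theta> *\<^sub>R c - l) \<le> K" using K by blast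
    define a where "a = c + (1/\<theta>) *\<^sub>R (p - \<theta> *\<^sub>R c - l)"
    have "dist c a = norm (p - \<theta> *\<^sub>R c - l) / \<theta>"
      unfolding a_def dist_norm using \<open>\<theta> > 0\<close> by simp
    also have "\<dots> \<le> K / \<theta>" using f \<open>\<theta> > 0\<close> by (simp add: divide_right_mono)
    also have "\<dots> = K * \<epsilon> / (\<bar>K\<bar> + 1)" unfolding \<theta>_def by simp
    also have "\<dots> < (\<bar>K\<bar> + 1) * \<epsilon> / (\<bar>K\<bar> + 1)"
      using \<open>0 < \<epsilon>\<close> by (intro divide_strict_right_mono mult_strict_right_mono) auto
    also have "\<dots> = \<epsilon>" by simp
    finally have "a \<in> A" using ball by auto
    moreover have "p - \<theta> *\<^sub>R a = l" unfolding a_def using \<open>\<theta> > 0\<close> by (simp add: algebra_simps)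
    ultimately show ?thesis using \<open>l \<in> lattice M\<close> by metis
  qed
  with \<open>\<theta> > 0\<close> show ?thesis unfolding lattice_covering_def by blast
qed

lemma lattice_covering_if_covrad_less:
  assumes "invertible M" "convex A" "ball c \<epsilon> \<subseteq> A" "0 < \<epsilon>" "covrad M A < \<theta>"
  shows "0 < \<theta> \<and> lattice_covering \<theta> A M"
proof -
  let ?S = "{\<theta>. 0 < \<theta> \<and> lattice_covering \<theta> A M}"
  \<comment> \<open>needed because \<open>Inf {}\<close> is an unspecified real\<close>
  have "?S \<noteq> {}" using lattice_covering_exists[OF assms(1,3,4)] by blast
  moreover have "Inf ?S < \<theta>" using assms(5) by (simp add: covrad_eq_Inf)
  ultimately have "\<exists>\<theta>' \<in> ?S. \<theta>' < \<theta>" by (rule cInf_lessD)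
  then obtain \<theta>' where "0 < \<theta>'" "lattice_covering \<theta>' A M" "\<theta>' < \<theta>" by blast
  moreover have "c \<in> A" using assms(3,4) centre_in_ball by blast
  ultimately show ?thesis using lattice_covering_mono[OF _ assms(2)] by simp
qed

definition vec_of_xy :: "real^'n \<Rightarrow> real \<Rightarrow> real^('n::finite + unit)" where
  "vec_of_xy x y = (\<chi> j. case j of Inl i \<Rightarrow> x$i | Inr _ \<Rightarrow> y)"

lemma xpart_vec_of_xy [simp]: "xpart (vec_of_xy x y) = x"
  by (simp add: xpart_def vec_of_xy_def)

lemma ypart_vec_of_xy [simp]: "ypart (vec_of_xy x y) = y"
  by (simp add: ypart_def vec_of_xy_def)

lemma xpart_diff [simp]: "xpart (v - w) = xpart v - xpart w"
  and xpart_scaleR [simp]: "xpart (c *\<^sub>R v) = c *\<^sub>R xpart v"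
  and ypart_diff [simp]: "ypart (v - w) = ypart v - ypart w"
  and ypart_scaleR [simp]: "ypart (c *\<^sub>R v) = c * ypart v"
  by (simp_all add: xpart_def ypart_def vec_eq_iff)

lemma open_xpart_ypart:
  fixes U :: "(real^'n::finite) set"
  assumes "open U" and "open V"
  shows "open {v::real^('n+unit). xpart v \<in> U \<and> ypart v \<in> V}"
proof -
  have "continuous_on UNIV (xpart :: real^('n+unit) \<Rightarrow> _)" "continuous_on UNIV (ypart :: real^('n+unit) \<Rightarrow> _)"
    unfolding xpart_def ypart_def by (auto intro!: continuous_intros continuous_on_vec_lambda)
  then show ?thesis using assms
    by (simp add: Collect_conj_eq open_Int open_vimage[unfolded vimage_def])
qed

lemma convex_cyl:
  fixes D :: "(real^'n::finite) set"
  assumes "convex D"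
  shows "convex (cyl D)"
proof -
  have "linear (xpart :: real^('n + unit) \<Rightarrow> real^'n)" "linear (ypart :: real^('n + unit) \<Rightarrow> real)"
    by (auto simp: linear_iff xpart_def ypart_def vec_eq_iff)
  then have "convex (xpart -` D \<inter> ypart -` {0<..1} :: (real^('n + unit)) set)"
    using assms by (intro convex_Int convex_linear_vimage) auto
  moreover have "cyl D = xpart -` D \<inter> ypart -` {0<..1}" unfolding cyl_def by auto
  ultimately show ?thesis by simp
qed

lemma cyl_contains_ball:
  fixes D :: "(real^'n::finite) set"
  assumes "interior D \<noteq> {}"
  obtains c \<epsilon> where "0 < \<epsilon>" "ball c \<epsilon> \<subseteq> cyl D"
proof -
  let ?U = "{v::real^('n + unit). xpart v \<in> interior D \<and> ypart v \<in> {0<..<1}}"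
  obtain x where "x \<in> interior D" using assms by blast
  then have "vec_of_xy x (1/2) \<in> ?U" by simp
  moreover have "open ?U" by (intro open_xpart_ypart) auto
  ultimately obtain \<epsilon> where "0 < \<epsilon>" "ball (vec_of_xy x (1/2)) \<epsilon> \<subseteq> ?U" by (meson openE)
  moreover have "?U \<subseteq> cyl D" unfolding cyl_def using interior_subset by fastforce
  ultimately show ?thesis using that by blast
qed

definition diagm :: "('a::finite \<Rightarrow> real) \<Rightarrow> real^'a^'a" where
  "diagm f = (\<chi> i j. if i = j then f i else 0)"

lemma vector_matrix_mult_diagm [simp]: "(v v* diagm f) $ j = v$j * f j"
  by (simp add: diagm_def vector_matrix_mult_def if_distrib[of "\<lambda>x. _ * x"] cong: if_cong)

lemma matrix_mul_diagm: "diagm f ** diagm g = diagm (\<lambda>i. f i * g i)"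
  by (simp add: diagm_def matrix_matrix_mult_def vec_eq_iff if_distrib[of "\<lambda>x. x * _"] cong: if_cong)

lemma matrix_inv_diagm:
  assumes "\<And>i. f i \<noteq> 0"
  shows "matrix_inv (diagm f) = diagm (\<lambda>i. inverse (f i))"
proof -
  have "diagm (\<lambda>_. 1) = (mat 1 :: real^'a^'a)" by (simp add: diagm_def mat_def)
  then show ?thesis using assms by (intro matrix_inv_eqI) (simp_all add: matrix_mul_diagm)
qed

lemma
  fixes v :: "real^('n::finite + unit)"
  assumes "0 < \<theta>"
  shows xpart_vmult_inv_Dmat: "xpart (v v* matrix_inv (Dmat \<theta>)) = (1/\<theta>) *\<^sub>R xpart v"
    and ypart_vmult_inv_Dmat: "ypart (v v* matrix_inv (Dmat \<theta>)) = \<theta> ^ CARD('n) * ypart v"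
proof -
  have "Dmat \<theta> = (diagm (\<lambda>i. case i of Inl _ \<Rightarrow> \<theta> | Inr _ \<Rightarrow> \<theta> powr (- real CARD('n))) :: 'n mat1)"
    unfolding Dmat_def diagm_def by simp
  moreover have "(case i of Inl _ \<Rightarrow> \<theta> | Inr _ \<Rightarrow> \<theta> powr (- real CARD('n))) \<noteq> 0" for i :: "'n + unit"
    using assms by (simp split: sum.split)
  moreover have "(\<lambda>i::'n + unit. inverse (case i of Inl _ \<Rightarrow> \<theta> | Inr _ \<Rightarrow> \<theta> powr (- real CARD('n)))) =
      (\<lambda>i. case i of Inl _ \<Rightarrow> 1/\<theta> | Inr _ \<Rightarrow> \<theta> ^ CARD('n))"
    using assms by (auto simp: fun_eq_iff powr_minus powr_realpow field_simps split: sum.split)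
  ultimately have inv: "matrix_inv (Dmat \<theta> :: 'n mat1) =
      diagm (\<lambda>i. case i of Inl _ \<Rightarrow> 1/\<theta> | Inr _ \<Rightarrow> \<theta> ^ CARD('n))"
    by (simp add: matrix_inv_diagm)
  then show "xpart (v v* matrix_inv (Dmat \<theta>)) = (1/\<theta>) *\<^sub>R xpart v"
    and "ypart (v v* matrix_inv (Dmat \<theta>)) = \<theta> ^ CARD('n) * ypart v"
    unfolding inv by (simp_all add: xpart_def ypart_def vec_eq_iff)
qed

lemma mem_coset_self: "M \<in> coset M"
proof -
  have "(mat 1 :: 'n::finite mat1) \<in> SLZ" unfolding SLZ_def by (simp add: det_I) (simp add: mat_def)
  then show ?thesis unfolding coset_def by (metis (mono_tags, lifting) matrix_mul_lid mem_Collect_eq)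
qed

lemma vector_matrix_mult_mem_lattice: "w \<in> lattice N \<Longrightarrow> w v* E \<in> lattice (N ** E)"
  unfolding lattice_def by (auto simp: vector_matrix_mul_assoc)

lemma lattice_subset_of_mem_coset:
  assumes "X \<in> coset M"
  shows "lattice X \<subseteq> lattice M"
proof
  fix w assume "w \<in> lattice X"
  obtain h where "X = h ** M" "h \<in> SLZ" using assms unfolding coset_def by blast
  moreover obtain u where "w = u v* X" "\<forall>i. u$i \<in> \<int>"
    using \<open>w \<in> lattice X\<close> unfolding lattice_def by blast
  moreover have "\<forall>j. (u v* h)$j \<in> \<int>"
    using calculation unfolding vector_matrix_mult_def SLZ_def by (auto intro!: Ints_sum Ints_mult)
  ultimately show "w \<in> lattice M"
    unfolding lattice_def by (auto simp: vector_matrix_mul_assoc[symmetric])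
qed

lemma Fset_mono: "lattice X \<subseteq> lattice M \<Longrightarrow> Fset X D t \<subseteq> Fset M D t"
  unfolding Fset_def by blast

lemma covrad_le_covrad_sup: "c \<in> C \<Longrightarrow> M \<in> c \<Longrightarrow> ereal (covrad M A) \<le> covrad_sup C A"
  unfolding covrad_sup_def by (blast intro: SUP_upper2 SUP_upper)

lemma Ffun_le:
  fixes M :: "('n::finite) mat1"
  assumes "invertible M" and "bounded D" and y0: "y0 \<in> Fset M D t"
  shows "Ffun M D t \<le> ereal y0"
proof -
  obtain R where R: "\<And>x. x \<in> D \<Longrightarrow> norm x \<le> R" using assms(2) bounded_iff by blast
  define c where "c = max y0 (R + norm t)"
  let ?box = "cbox (- (\<chi> _. c)) (\<chi> _. c) :: (real^('n + unit)) set"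
  let ?F = "Fset M D t \<inter> {..y0}"
  have "?F \<subseteq> ypart ` (lattice M \<inter> ?box)"
  proof
    fix y assume "y \<in> ?F"
    then obtain v where v: "v \<in> lattice M" "ypart v = y" "xpart v + t \<in> D" "0 < y" "y \<le> y0"
      unfolding Fset_def by auto
    have "\<bar>v$j\<bar> \<le> c" for j
    proof (cases j)
      case (Inl i)
      have "\<bar>v$j\<bar> = \<bar>xpart v $ i\<bar>" unfolding Inl xpart_def by simp
      also have "\<dots> \<le> norm (xpart v + t) + norm t"
        by (metis add_diff_cancel component_le_norm_cart norm_triangle_ineq4 order_trans)
      finally show ?thesis using R[OF v(3)] unfolding c_def by linarith
    next
      case (Inr u)
      then show ?thesis using v unfolding c_def ypart_def by simp
    qed
    then have "v \<in> ?box" unfolding mem_box_cart by (simp add: abs_le_iff) (meson neg_le_iff_le minus_le_iff)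
    with v show "y \<in> ypart ` (lattice M \<inter> ?box)" by blast
  qed
  then have "finite ?F"
    by (rule finite_subset) (intro finite_imageI lattice_Int_bounded_finite assms(1) bounded_cbox)
  moreover have "y0 \<in> ?F" using y0 by simp
  ultimately have "Min ?F \<in> Fset M D t" "Min ?F \<le> y0" "\<forall>z \<in> Fset M D t. Min ?F \<le> z"
    using Min_in[of ?F] Min_le[of ?F] by (auto, meson IntI atMost_iff le_cases order_trans)
  moreover from this have "Inf (Fset M D t) = Min ?F" by (intro cInf_eq_minimum) auto
  ultimately show ?thesis unfolding Ffun_def by auto
qed

lemma Fset_inv_Dmat_witness:
  fixes N :: "('n::finite) mat1"
  assumes "0 < \<theta>" and "lattice_covering \<theta> (cyl D) N"
  shows "\<exists>y \<in> Fset (N ** matrix_inv (Dmat \<theta>)) D t. y \<le> \<theta> ^ (CARD('n) + 1)"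
proof -
  obtain b where b: "b \<in> cyl D" "vec_of_xy (\<theta> *\<^sub>R t) 0 - \<theta> *\<^sub>R b \<in> lattice N"
    using assms(2) unfolding lattice_covering_def by blast
  define w where "w = (\<theta> *\<^sub>R b - vec_of_xy (\<theta> *\<^sub>R t) 0) v* matrix_inv (Dmat \<theta>)"
  have "w \<in> lattice (N ** matrix_inv (Dmat \<theta>))"
    unfolding w_def using lattice_uminus[OF b(2)] by (simp add: vector_matrix_mult_mem_lattice)
  moreover have "xpart w + t = xpart b"
    unfolding w_def using assms(1) by (simp add: xpart_vmult_inv_Dmat algebra_simps)
  moreover have yw: "ypart w = \<theta> ^ (CARD('n) + 1) * ypart b"
    unfolding w_def using assms(1) by (simp add: ypart_vmult_inv_Dmat)
  moreover have "xpart b \<in> D" "0 < ypart b" "ypart b \<le> 1" using b(1) unfolding cyl_def by auto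
  ultimately have "ypart w \<in> Fset (N ** matrix_inv (Dmat \<theta>)) D t"
    unfolding Fset_def using assms(1) by auto
  moreover have "ypart w \<le> \<theta> ^ (CARD('n) + 1)"
    unfolding yw using assms(1) \<open>ypart b \<le> 1\<close> by (simp add: mult_left_le)
  ultimately show ?thesis by blast
qed

theorem proposition2p3:
  fixes D :: "(real^'n::finite) set" and C :: "('n mat1) set set" and \<theta> :: real
  assumes "bounded D" and "convex D" and "interior D \<noteq> {}"
    and "C \<subseteq> quotSL" and "compactin quot_top C"
    and "ereal \<theta> > covrad_sup C (cyl D)"
  shows "\<forall>M \<in> SLR. \<forall>t \<in> D.
           coset M \<in> {coset (N ** matrix_inv (Dmat \<theta>)) | N. N \<in> SLR \<and> coset N \<in> C}
           \<longrightarrow> Ffun M D t \<le> ereal (\<theta> ^ (CARD('n) + 1))"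
proof (intro ballI impI)
  fix M t assume "M \<in> SLR" "t \<in> D"
    and "coset M \<in> {coset (N ** matrix_inv (Dmat \<theta>)) | N. N \<in> SLR \<and> coset N \<in> C}"
  then obtain N where N: "coset M = coset (N ** matrix_inv (Dmat \<theta>))" "N \<in> SLR" "coset N \<in> C"
    by blast
  have "ereal (covrad N (cyl D)) < ereal \<theta>"
    using covrad_le_covrad_sup[OF N(3) mem_coset_self] assms(6) by (rule le_less_trans)
  then have "covrad N (cyl D) < \<theta>" by simp
  moreover obtain c \<epsilon> where "0 < \<epsilon>" "ball c \<epsilon> \<subseteq> cyl D" using cyl_contains_ball[OF assms(3)] .
  moreover have "invertible N" using N(2) by (simp add: SLR_def invertible_det_nz)
  ultimately have "0 < \<theta>" "lattice_covering \<theta> (cyl D) N"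
    using lattice_covering_if_covrad_less[OF _ convex_cyl[OF assms(2)]] by blast+
  then obtain y where y: "y \<in> Fset (N ** matrix_inv (Dmat \<theta>)) D t" "y \<le> \<theta> ^ (CARD('n) + 1)"
    using Fset_inv_Dmat_witness by blast
  have "lattice (N ** matrix_inv (Dmat \<theta>)) \<subseteq> lattice M"
    using lattice_subset_of_mem_coset mem_coset_self N(1) by metis
  with y(1) have "y \<in> Fset M D t" using Fset_mono by blast
  moreover have "invertible M" using \<open>M \<in> SLR\<close> by (simp add: SLR_def invertible_det_nz)
  ultimately show "Ffun M D t \<le> ereal (\<theta> ^ (CARD('n) + 1))"
    using Ffun_le assms(1) y(2) by (meson ereal_less_eq(3) order_trans)
qed

end
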